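(* Let $\{a_n,n\ge1\}$ be a sequence of positive real numbers such that $a_n\to\infty$ and $a_n/a_{n-1}\to1$ as $n\to\infty$. Let $S_n=\sum_{i=1}^na_i$ and $S_{2,n}=\sum_{i=1}^na_i^2$. Then $a_n/S_n\to0$ and $S_{2,n}/S_n^2\to0$ as $n\to\infty$. *)

theory Defs
  imports Complex_Main
begin

end

theory Submission
  imports Defs
begin

text \<open>Iterating the ratio condition gives \<open>a (n - j) / a n \<longrightarrow> 1\<close> for each fixed \<open>j\<close>, so the
  last \<open>K\<close> terms alone already contribute about \<open>K \<cdot> a n\<close> to \<open>S n\<close>; hence \<open>S n / a n \<longrightarrow> \<infinity>\<close>.
  For the squares, \<open>a i \<le> \<epsilon> S i \<le> \<epsilon> S n\<close> for all large \<open>i\<close> while the finitely many early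
  terms are bounded by a constant \<open>C\<close>, so \<open>S\<^sub>2 n \<le> (\<epsilon> S n + C) S n\<close>, and \<open>C / S n \<longrightarrow> 0\<close>.\<close>

lemma tendsto_shifted_ratio:
  fixes a :: "nat \<Rightarrow> 'a::real_normed_field"
  assumes nonzero: "\<And>n. 1 \<le> n \<Longrightarrow> a n \<noteq> 0"
    and ratio: "(\<lambda>n. a n / a (n - 1)) \<longlonglongrightarrow> 1"
  shows "(\<lambda>n. a (n - j) / a n) \<longlonglongrightarrow> 1"
proof (induction j)
  case 0
  have "\<forall>\<^sub>F n in sequentially. 1 = a (n - 0) / a n"
    using eventually_ge_at_top[of 1] by eventually_elim (use nonzero in simp)
  then show ?case
    by (rule Lim_transform_eventually[OF tendsto_const])
next
  case (Suc j)
  have "(\<lambda>n. a (n - 1) / a n) \<longlonglongrightarrow> 1"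
    using tendsto_inverse[OF ratio] by simp
  then have "(\<lambda>n. a (n - j - 1) / a (n - j)) \<longlonglongrightarrow> 1"
    using filterlim_compose filterlim_minus_const_nat_at_top by fastforce
  from tendsto_mult[OF this Suc.IH]
  have "(\<lambda>n. a (n - j - 1) / a (n - j) * (a (n - j) / a n)) \<longlonglongrightarrow> 1"
    by simp
  moreover have "\<forall>\<^sub>F n in sequentially.
      a (n - j - 1) / a (n - j) * (a (n - j) / a n) = a (n - Suc j) / a n"
    using eventually_ge_at_top[of "Suc j"] by eventually_elim (use nonzero in simp)
  ultimately show ?case
    by (rule Lim_transform_eventually)
qed

lemma sum_last_terms_le_partial_sum:
  fixes a :: "nat \<Rightarrow> 'a::ordered_comm_monoid_add"
  assumes nonneg: "\<And>i. 1 \<le> i \<Longrightarrow> 0 \<le> a i" and "K \<le> n"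
  shows "(\<Sum>j<K. a (n - j)) \<le> (\<Sum>i=1..n. a i)"
proof -
  have "inj_on (\<lambda>j. n - j) {..<K}"
    using \<open>K \<le> n\<close> by (auto simp: inj_on_def)
  then have "(\<Sum>j<K. a (n - j)) = sum a ((\<lambda>j. n - j) ` {..<K})"
    by (simp add: sum.reindex)
  also have "\<dots> \<le> (\<Sum>i=1..n. a i)"
    by (rule sum_mono2) (use \<open>K \<le> n\<close> nonneg in auto)
  finally show ?thesis .
qed

lemma term_le_partial_sum:
  fixes a :: "nat \<Rightarrow> 'a::ordered_comm_monoid_add"
  assumes nonneg: "\<And>i. 1 \<le> i \<Longrightarrow> 0 \<le> a i" and "1 \<le> i" "i \<le> n"
  shows "a i \<le> (\<Sum>k=1..n. a k)"
  using sum_mono2[of "{1..n}" "{i}" a] assms by auto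

lemma partial_sum_mono:
  fixes a :: "nat \<Rightarrow> 'a::ordered_comm_monoid_add"
  assumes nonneg: "\<And>i. 1 \<le> i \<Longrightarrow> 0 \<le> a i" and "m \<le> n"
  shows "(\<Sum>k=1..m. a k) \<le> (\<Sum>k=1..n. a k)"
  by (rule sum_mono2) (use assms in auto)

lemma filterlim_partial_sum_over_term_at_top:
  fixes a :: "nat \<Rightarrow> real"
  assumes pos: "\<And>n. 1 \<le> n \<Longrightarrow> 0 < a n"
    and ratio: "(\<lambda>n. a n / a (n - 1)) \<longlonglongrightarrow> 1"
  shows "filterlim (\<lambda>n. (\<Sum>i=1..n. a i) / a n) at_top sequentially"
  unfolding filterlim_at_top
proof
  fix Z :: real
  obtain K :: nat where "Z < real K"
    using reals_Archimedean2 by blast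
  have "(\<lambda>n. \<Sum>j<K. a (n - j) / a n) \<longlonglongrightarrow> (\<Sum>j<K. 1)"
    by (intro tendsto_sum tendsto_shifted_ratio ratio) (use pos in force)
  with \<open>Z < real K\<close> have "\<forall>\<^sub>F n in sequentially. Z < (\<Sum>j<K. a (n - j) / a n)"
    by (intro order_tendstoD(1)) auto
  then show "\<forall>\<^sub>F n in sequentially. Z \<le> (\<Sum>i=1..n. a i) / a n"
    using eventually_ge_at_top[of "max K 1"]
  proof eventually_elim
    case (elim n)
    then have "0 < a n" "K \<le> n"
      using pos by auto
    have "(\<Sum>j<K. a (n - j) / a n) = (\<Sum>j<K. a (n - j)) / a n"
      by (simp add: sum_divide_distrib)
    also have "\<dots> \<le> (\<Sum>i=1..n. a i) / a n"
      using sum_last_terms_le_partial_sum[of a K n] pos \<open>0 < a n\<close> \<open>K \<le> n\<close>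
      by (simp add: divide_right_mono less_imp_le)
    finally show ?case
      using elim by linarith
  qed
qed

lemma sum_squares_le_bound_times_sum:
  fixes a :: "'b \<Rightarrow> 'a::linordered_semidom"
  assumes "\<And>i. i \<in> A \<Longrightarrow> 0 \<le> a i \<and> a i \<le> B"
  shows "(\<Sum>i\<in>A. (a i)\<^sup>2) \<le> B * (\<Sum>i\<in>A. a i)"
  unfolding sum_distrib_left
  by (rule sum_mono) (use assms in \<open>auto simp: power2_eq_square intro: mult_right_mono\<close>)

lemma sum_squares_over_square_sum_tendsto_zero:
  fixes a :: "nat \<Rightarrow> real"
  assumes nonneg: "\<And>i. 1 \<le> i \<Longrightarrow> 0 \<le> a i"
    and sum_infty: "filterlim (\<lambda>n. \<Sum>i=1..n. a i) at_top sequentially"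
    and negligible: "(\<lambda>n. a n / (\<Sum>i=1..n. a i)) \<longlonglongrightarrow> 0"
  shows "(\<lambda>n. (\<Sum>i=1..n. (a i)\<^sup>2) / (\<Sum>i=1..n. a i)\<^sup>2) \<longlonglongrightarrow> 0"
proof (rule order_tendstoI)
  fix c :: real
  assume "c < 0"
  moreover have "0 \<le> (\<Sum>i=1..n. (a i)\<^sup>2) / (\<Sum>i=1..n. a i)\<^sup>2" for n
    by (simp add: sum_nonneg)
  ultimately show "\<forall>\<^sub>F n in sequentially. c < (\<Sum>i=1..n. (a i)\<^sup>2) / (\<Sum>i=1..n. a i)\<^sup>2"
    by (auto intro: less_le_trans always_eventually)
next
  fix \<epsilon> :: real
  assume "0 < \<epsilon>"
  define S where "S n = (\<Sum>i=1..n. a i)" for n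
  have S_mono: "S m \<le> S n" if "m \<le> n" for m n
    unfolding S_def using partial_sum_mono[OF nonneg that] .
  have a_le_S: "a i \<le> S i" if "1 \<le> i" for i
    unfolding S_def using term_le_partial_sum[OF nonneg that order_refl] .
  from order_tendstoD(2)[OF negligible, of "\<epsilon> / 2"] \<open>0 < \<epsilon>\<close>
  obtain N where N: "\<And>i. N \<le> i \<Longrightarrow> a i / S i < \<epsilon> / 2"
    unfolding S_def eventually_sequentially by auto
  have late_terms: "a i \<le> \<epsilon> / 2 * S i" if "N \<le> i" "1 \<le> i" for i
  proof (cases "S i = 0")
    case True
    then show ?thesis
      using a_le_S[OF \<open>1 \<le> i\<close>] by simp
  next
    case False
    then have "0 < S i"
      using a_le_S[OF \<open>1 \<le> i\<close>] nonneg[OF \<open>1 \<le> i\<close>] by linarith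
    then show ?thesis
      using N[OF \<open>N \<le> i\<close>] by (simp add: divide_less_eq less_imp_le)
  qed
  have "\<forall>\<^sub>F n in sequentially. 2 * S N / \<epsilon> < S n"
    using sum_infty unfolding S_def filterlim_at_top_dense by blast
  then show "\<forall>\<^sub>F n in sequentially. (\<Sum>i=1..n. (a i)\<^sup>2) / (\<Sum>i=1..n. a i)\<^sup>2 < \<epsilon>"
  proof eventually_elim
    case (elim n)
    have "0 \<le> S N"
      using S_mono[of 0 N] by (simp add: S_def)
    with \<open>0 < \<epsilon>\<close> have "0 \<le> 2 * S N / \<epsilon>"
      by simp
    with elim have "0 < S n"
      by linarith
    from elim \<open>0 < \<epsilon>\<close> have "S N < \<epsilon> / 2 * S n"
      by (simp add: field_simps)
    have "0 \<le> a i \<and> a i \<le> \<epsilon> / 2 * S n + S N" if "i \<in> {1..n}" for i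
    proof (cases "i \<le> N")
      case True
      then have "a i \<le> S N"
        using a_le_S S_mono that by (meson atLeastAtMost_iff order_trans)
      with \<open>0 < S n\<close> \<open>0 < \<epsilon>\<close> that nonneg show ?thesis
        by (simp add: add_increasing)
    next
      case False
      with that have "a i \<le> \<epsilon> / 2 * S i"
        by (intro late_terms) auto
      also have "\<dots> \<le> \<epsilon> / 2 * S n"
        using S_mono that \<open>0 < \<epsilon>\<close> by (simp add: mult_left_mono)
      finally have "a i \<le> \<epsilon> / 2 * S n" .
      with \<open>0 \<le> S N\<close> that nonneg show ?thesis
        by simp
    qed
    then have "(\<Sum>i=1..n. (a i)\<^sup>2) \<le> (\<epsilon> / 2 * S n + S N) * S n"
      unfolding S_def by (rule sum_squares_le_bound_times_sum)
    also have "\<dots> < (\<epsilon> / 2 * S n + \<epsilon> / 2 * S n) * S n"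
      using \<open>0 < S n\<close> \<open>S N < \<epsilon> / 2 * S n\<close> by (intro mult_strict_right_mono) simp_all
    also have "\<dots> = \<epsilon> * (S n)\<^sup>2"
      by (simp add: power2_eq_square)
    finally show ?case
      using \<open>0 < S n\<close> by (simp add: S_def divide_less_eq)
  qed
qed

theorem lemmaA1:
  fixes a :: "nat \<Rightarrow> real"
  assumes pos: "\<And>n. n \<ge> 1 \<Longrightarrow> a n > 0"
    and infty: "filterlim a at_top sequentially"
    and ratio: "(\<lambda>n. a n / a (n - 1)) \<longlonglongrightarrow> 1"
  shows "(\<lambda>n. a n / (\<Sum>i=1..n. a i)) \<longlonglongrightarrow> 0 \<and>
         ((\<lambda>n. (\<Sum>i=1..n. (a i)\<^sup>2) / (\<Sum>i=1..n. a i)\<^sup>2) \<longlonglongrightarrow> 0)"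
proof
  have nonneg: "\<And>i. 1 \<le> i \<Longrightarrow> 0 \<le> a i"
    using pos by (simp add: less_imp_le)
  show negligible: "(\<lambda>n. a n / (\<Sum>i=1..n. a i)) \<longlonglongrightarrow> 0"
    using tendsto_inverse_0_at_top[OF filterlim_partial_sum_over_term_at_top[OF pos ratio]]
    by simp
  have "filterlim (\<lambda>n. \<Sum>i=1..n. a i) at_top sequentially"
    by (rule filterlim_at_top_mono[OF infty])
      (use term_le_partial_sum[of a, OF nonneg] in \<open>auto simp: eventually_sequentially\<close>)
  then show "(\<lambda>n. (\<Sum>i=1..n. (a i)\<^sup>2) / (\<Sum>i=1..n. a i)\<^sup>2) \<longlonglongrightarrow> 0"
    using sum_squares_over_square_sum_tendsto_zero nonneg negligible by blast
qed

end
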